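(* Let $p\geqslant 2$ be a prime number and let $P(x)\in\mathbb{Q}[x]$ be a polynomial of degree $d$, written as $P(x)=\sum_{i=0}^{d}\frac{b_i}{c_i}x^i$ with $b_i,c_i\in\mathbb{Z}$, $c_i\neq 0$, $\gcd(b_i,c_i)=1$. Let $\gamma\in\mathbb{Z}$, and for $i\in\{0,\dots,d\}$ write $P(\gamma+i)=\frac{r_i}{q_i}$ with $r_i,q_i\in\mathbb{Z}$, $q_i\neq 0$, $\gcd(r_i,q_i)=1$. Suppose $r_0\equiv r_1\equiv\dots\equiv r_d\equiv 0\pmod p$ and $d<p$. Then $b_0\equiv b_1\equiv\dots\equiv b_d\equiv 0\pmod p$. *)

theory Defs
  imports Complex_Main "HOL-Computational_Algebra.Polynomial" "HOL-Computational_Algebra.Primes"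
begin

end

theory Submission
  imports Defs
begin

text \<open>
  The rationals \<open>a / b\<close> with \<open>p\<close> dividing \<open>a\<close> but not \<open>b\<close> form the maximal ideal of the
  localisation of \<open>\<int>\<close> at \<open>p\<close>; it is closed under sums and under division by integers prime
  to \<open>p\<close>. Dividing \<open>P\<close> by \<open>x - \<gamma>\<close> gives \<open>P = (x - \<gamma>) R + P(\<gamma>)\<close> with \<open>deg R < deg P\<close> and
  \<open>R(\<gamma> + 1 + i) = (P(\<gamma> + 1 + i) - P(\<gamma>)) / (i + 1)\<close>. Since \<open>i + 1 \<le> deg P < p\<close>, the values of \<open>R\<close>
  at \<open>\<gamma> + 1, \<dots>, \<gamma> + deg P\<close> lie in the ideal, so by induction on the degree so do the
  coefficients of \<open>R\<close>, and hence those of \<open>P\<close>, which are \<open>P(\<gamma>) - \<gamma> R\<^sub>0\<close> and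
  \<open>R\<^sub>k\<^sub>-\<^sub>1 - \<gamma> R\<^sub>k\<close>.
\<close>

definition p_divisible :: "int \<Rightarrow> rat \<Rightarrow> bool" where
  "p_divisible p x \<longleftrightarrow> (\<exists>a b. x = of_int a / of_int b \<and> p dvd a \<and> \<not> p dvd b)"

lemma p_divisible_of_coprime_fraction:
  assumes "prime p" "p dvd r" "coprime r q"
  shows "p_divisible p (of_int r / of_int q)"
proof -
  have "\<not> p dvd q"
    using assms by (meson coprime_common_divisor not_prime_unit)
  then show ?thesis
    unfolding p_divisible_def using assms(2) by blast
qed

lemma p_divisible_fraction_imp_dvd_numerator:
  assumes "prime p" "p_divisible p (of_int b / of_int c)" "c \<noteq> 0"
  shows "p dvd b"
proof -
  obtain a e where ae: "of_int b / of_int c = (of_int a / of_int e :: rat)" "p dvd a" "\<not> p dvd e"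
    using assms(2) unfolding p_divisible_def by blast
  have "e \<noteq> 0"
    using ae(3) by auto
  with ae(1) assms(3) have "(of_int (b * e) :: rat) = of_int (a * c)"
    by (simp add: field_simps)
  then have "b * e = a * c"
    by (simp only: of_int_eq_iff)
  then have "p dvd b * e"
    using ae(2) by simp
  then show ?thesis
    using ae(3) assms(1) by (simp add: prime_dvd_mult_iff)
qed

lemma p_divisible_0:
  assumes "prime p"
  shows "p_divisible p 0"
  using p_divisible_of_coprime_fraction[OF assms, of 0 1] by simp

lemma p_divisible_add:
  assumes "prime p" "p_divisible p x" "p_divisible p y"
  shows "p_divisible p (x + y)"
proof -
  obtain a b where x: "x = of_int a / of_int b" "p dvd a" "\<not> p dvd b"
    using assms(2) unfolding p_divisible_def by blast
  obtain a' b' where y: "y = of_int a' / of_int b'" "p dvd a'" "\<not> p dvd b'"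
    using assms(3) unfolding p_divisible_def by blast
  have "b \<noteq> 0" "b' \<noteq> 0"
    using x(3) y(3) by auto
  then have "x + y = of_int (a * b' + a' * b) / of_int (b * b')"
    using x(1) y(1) by (simp add: field_simps)
  moreover have "\<not> p dvd b * b'"
    using x(3) y(3) assms(1) by (simp add: prime_dvd_mult_iff)
  ultimately show ?thesis
    unfolding p_divisible_def using x(2) y(2) by fastforce
qed

lemma p_divisible_mult_of_int:
  assumes "p_divisible p x"
  shows "p_divisible p (of_int m * x)"
proof -
  obtain a b where x: "x = of_int a / of_int b" "p dvd a" "\<not> p dvd b"
    using assms unfolding p_divisible_def by blast
  then have "of_int m * x = of_int (m * a) / of_int b"
    by simp
  then show ?thesis
    unfolding p_divisible_def using x(2,3) by (meson dvd_mult)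
qed

lemma p_divisible_diff:
  assumes "prime p" "p_divisible p x" "p_divisible p y"
  shows "p_divisible p (x - y)"
  using p_divisible_add[OF assms(1,2) p_divisible_mult_of_int[OF assms(3), of "-1"]] by simp

lemma p_divisible_divide_of_int:
  assumes "prime p" "p_divisible p x" "\<not> p dvd m"
  shows "p_divisible p (x / of_int m)"
proof -
  obtain a b where x: "x = of_int a / of_int b" "p dvd a" "\<not> p dvd b"
    using assms(2) unfolding p_divisible_def by blast
  then have "x / of_int m = of_int a / of_int (b * m)"
    by simp
  moreover have "\<not> p dvd b * m"
    using x(3) assms(1,3) by (simp add: prime_dvd_mult_iff)
  ultimately show ?thesis
    unfolding p_divisible_def using x(2) by blast
qed

lemma poly_synthetic_div_mult:
  fixes P :: "'a::comm_ring poly"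
  shows "poly (synthetic_div P c) x * (x - c) = poly P x - poly P c"
  using arg_cong[OF synthetic_div_correct[of P c], of "\<lambda>Q. poly Q x"]
  by (simp add: algebra_simps)

lemma coeff_via_synthetic_div:
  fixes P :: "'a::comm_ring poly"
  shows "coeff P k = coeff (pCons (poly P c) (synthetic_div P c)) k - c * coeff (synthetic_div P c) k"
  using arg_cong[OF synthetic_div_correct[of P c], of "\<lambda>Q. coeff Q k"]
  by (simp add: algebra_simps)

lemma p_divisible_values_synthetic_div:
  fixes P :: "rat poly"
  assumes "prime p" "int (Suc n) < p"
    and at_points: "\<forall>i\<le>Suc n. p_divisible p (poly P (of_int (\<gamma> + int i)))"
  shows "\<forall>i\<le>n. p_divisible p (poly (synthetic_div P (of_int \<gamma>)) (of_int (\<gamma> + 1 + int i)))"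
proof (intro allI impI)
  fix i
  assume "i \<le> n"
  let ?x = "of_int (\<gamma> + 1 + int i) :: rat"
  have "?x - of_int \<gamma> = of_int (int i + 1)"
    by simp
  then have R: "poly (synthetic_div P (of_int \<gamma>)) ?x = (poly P ?x - poly P (of_int \<gamma>)) / of_int (int i + 1)"
    using poly_synthetic_div_mult[of P "of_int \<gamma>" ?x] by (simp add: field_simps)
  have "p_divisible p (poly P ?x - poly P (of_int \<gamma>))"
    using p_divisible_diff[OF assms(1)] at_points \<open>i \<le> n\<close>
    by (metis (no_types) Suc_le_mono add.assoc add.right_neutral of_nat_0 of_nat_Suc le0)
  moreover have "\<not> p dvd int i + 1"
  proof
    assume "p dvd int i + 1"
    then have "p \<le> int i + 1"
      by (rule zdvd_imp_le) simp
    with \<open>i \<le> n\<close> assms(2) show False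
      by simp
  qed
  ultimately show "p_divisible p (poly (synthetic_div P (of_int \<gamma>)) ?x)"
    unfolding R using p_divisible_divide_of_int[OF assms(1)] by blast
qed

lemma p_divisible_coeffs_if_values:
  fixes P :: "rat poly"
  assumes "prime p" "degree P \<le> n" "int n < p"
    and "\<forall>i\<le>n. p_divisible p (poly P (of_int (\<gamma> + int i)))"
  shows "p_divisible p (coeff P k)"
  using assms(2-)
proof (induction n arbitrary: P \<gamma> k)
  case 0
  then obtain a where "P = [:a:]"
    by (metis degree_eq_zeroE le_zero_eq)
  then show ?case
    using 0 p_divisible_0[OF assms(1)] by (cases k) simp_all
next
  case (Suc n)
  define R where "R = synthetic_div P (of_int \<gamma>)"
  have value_\<gamma>: "p_divisible p (poly P (of_int \<gamma>))"
    using Suc.prems(3) by (metis add.right_neutral le0 of_nat_0)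
  have "p_divisible p (coeff R j)" for j
  proof (rule Suc.IH)
    show "degree R \<le> n"
      using Suc.prems(1) by (simp add: R_def degree_synthetic_div)
    show "int n < p"
      using Suc.prems(2) by simp
    show "\<forall>i\<le>n. p_divisible p (poly R (of_int (\<gamma> + 1 + int i)))"
      unfolding R_def using p_divisible_values_synthetic_div[OF assms(1) Suc.prems(2,3)] .
  qed
  then have "p_divisible p (coeff (pCons (poly P (of_int \<gamma>)) R) k)"
    using value_\<gamma> by (cases k) simp_all
  then show ?case
    unfolding coeff_via_synthetic_div[of P k "of_int \<gamma>"] R_def[symmetric]
    using p_divisible_diff[OF assms(1) _ p_divisible_mult_of_int] \<open>\<And>j. p_divisible p (coeff R j)\<close>
    by blast
qed

theorem lemma3p3:
  fixes p :: nat and P :: "rat poly" and d :: nat and \<gamma> :: int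
    and b c r q :: "nat \<Rightarrow> int"
  assumes "prime p"
    and "degree P = d"
    and "\<And>i. i \<le> d \<Longrightarrow> c i \<noteq> 0 \<and> coprime (b i) (c i) \<and>
                 coeff P i = of_int (b i) / of_int (c i)"
    and "\<And>i. i \<le> d \<Longrightarrow> q i \<noteq> 0 \<and> coprime (r i) (q i) \<and>
                 poly P (of_int (\<gamma> + int i)) = of_int (r i) / of_int (q i)"
    and "\<And>i. i \<le> d \<Longrightarrow> int p dvd r i"
    and "d < p"
  shows "\<forall>i\<le>d. int p dvd b i"
proof (intro allI impI)
  fix i
  assume "i \<le> d"
  have prime_p: "prime (int p)"
    using assms(1) by simp
  have "\<forall>j\<le>d. p_divisible (int p) (poly P (of_int (\<gamma> + int j)))"
    using assms(4,5) p_divisible_of_coprime_fraction[OF prime_p] by auto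
  then have "p_divisible (int p) (coeff P i)"
    using p_divisible_coeffs_if_values[OF prime_p, of P d] assms(2,6) by simp
  then show "int p dvd b i"
    using p_divisible_fraction_imp_dvd_numerator[OF prime_p] assms(3)[OF \<open>i \<le> d\<close>] by simp
qed

end
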